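(* Let $\varepsilon\in(0,1)$ and let $C=\Omega\left(\frac{1}{\varepsilon}\right)$. Any one-pass streaming algorithm that outputs a $(1+\varepsilon)$-approximation of the number of distinct elements on streams whose frequency vector has $C$ coordinates with frequency more than $1$ must use $\Omega\left(\min\left(\frac{1}{\varepsilon^2},C\right)\right)$ bits of space.
   Context: Streaming model: a stream of item insertions from the universe $[n]$ defines a frequency vector $f$ ($f_i$ is the number of occurrences of $i$); the number of distinct elements is $F_0=|\{i:f_i\neq 0\}|$. A $(1+\varepsilon)$-approximation to $F_0$ is a value $\hat F$ with $(1-\varepsilon)F_0\le\hat F\le(1+\varepsilon)F_0$, required to hold with constant probability (e.g., at least $\frac23$). *)

theory Defs
  imports "HOL-Probability.Probability"
begin

definition freq :: "nat list \<Rightarrow> nat \<Rightarrow> nat" where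
  "freq xs i = count_list xs i"

definition F0 :: "nat list \<Rightarrow> nat" where
  "F0 xs = card {i. freq xs i \<noteq> 0}"

definition num_heavy :: "nat list \<Rightarrow> nat" where
  "num_heavy xs = card {i. freq xs i > 1}"

text \<open>A randomized one-pass streaming algorithm: a random seed r drawn from a pmf
  (public randomness, not charged to space), an initial memory state, an update
  function processing one stream item, and an output function.\<close>

definition run_stream ::
  "('r \<Rightarrow> bool list) \<Rightarrow> ('r \<Rightarrow> nat \<Rightarrow> bool list \<Rightarrow> bool list) \<Rightarrow> 'r \<Rightarrow> nat list \<Rightarrow> bool list" where
  "run_stream init upd r xs = fold (upd r) xs (init r)"

definition uses_space ::
  "'r pmf \<Rightarrow> ('r \<Rightarrow> bool list) \<Rightarrow> ('r \<Rightarrow> nat \<Rightarrow> bool list \<Rightarrow> bool list) \<Rightarrow> nat \<Rightarrow> nat \<Rightarrow> bool" where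
  "uses_space R init upd n s \<longleftrightarrow>
     (\<forall>r \<in> set_pmf R. length (init r) = s \<and>
        (\<forall>x < n. \<forall>st. length st = s \<longrightarrow> length (upd r x st) = s))"

definition approximates_F0 ::
  "'r pmf \<Rightarrow> ('r \<Rightarrow> bool list) \<Rightarrow> ('r \<Rightarrow> nat \<Rightarrow> bool list \<Rightarrow> bool list) \<Rightarrow>
   ('r \<Rightarrow> bool list \<Rightarrow> real) \<Rightarrow> nat \<Rightarrow> real \<Rightarrow> nat \<Rightarrow> bool" where
  "approximates_F0 R init upd out n eps C \<longleftrightarrow>
     (\<forall>xs. set xs \<subseteq> {..<n} \<and> num_heavy xs = C \<longrightarrow>
        measure_pmf.prob R
          {r. (1 - eps) * real (F0 xs) \<le> out r (run_stream init upd r xs) \<and>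
              out r (run_stream init upd r xs) \<le> (1 + eps) * real (F0 xs)} \<ge> 2/3)"

end

(*
  A reduction from one-way gap Hamming distance.  Let M = min (1 / eps^2) C,
  m ~ M / 102400 and L = C div m.  Alice turns X \<subseteq> {..<m} into a stream of C distinct items
  in which position k carries the bit [k div L \<in> X], and feeds it twice; Bob appends the
  stream of Y once.  Then exactly C items are heavy and F0 = C + L |X \<triangle> Y|, so an estimate
  within a factor 1 \<plusminus> eps determines |X \<triangle> Y| up to 8 eps m, i.e. up to O(sqrt m).

  Fix a seed that is correct on 2/3 of all pairs (X, Y); the memory after Alice's part is an
  s-bit message.  If X and X' send the same message and both are answered correctly for a
  fifth of all Y, then |X \<triangle> Y| - |X' \<triangle> Y| stays within O(sqrt m) for those Y, which
  by anti-concentration (the central binomial coefficient is O(4^d / sqrt d)) forces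
  |X \<triangle> X'| \<le> m / 16.  So each message is shared by at most a Hamming ball of radius m / 16
  of the many good X, and counting gives s > m / 4.  When M is bounded it suffices that
  s \<ge> 1, and an algorithm without memory cannot tell F0 = C from a much larger F0.
*)

theory Submission
  imports Defs
begin

section \<open>Central binomial coefficients\<close>

lemma central_binomial_Suc:
  "Suc k * ((2 * Suc k) choose Suc k) = 2 * (2 * k + 1) * ((2 * k) choose k)"
proof -
  have "(2 * Suc k) choose Suc k = (Suc (2 * k) choose k) + (Suc (2 * k) choose Suc k)"
    by simp
  also have "Suc (2 * k) choose k = Suc (2 * k) choose Suc k"
    using binomial_symmetric[of "Suc k" "Suc (2 * k)"] by simp
  finally have "Suc k * ((2 * Suc k) choose Suc k) = 2 * (Suc k * (Suc (2 * k) choose Suc k))"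
    by simp
  then show ?thesis
    by (simp only: Suc_times_binomial) simp
qed

lemma central_binomial_sq_le: "((2 * k) choose k)^2 * (2 * k + 1) \<le> 16 ^ k"
proof (induction k)
  case (Suc k)
  define b where "b = (2 * k) choose k"
  define b' where "b' = (2 * Suc k) choose Suc k"
  have "(Suc k)^2 * (b'^2 * (2 * Suc k + 1)) = (Suc k * b')^2 * (2 * k + 3)"
    by (simp add: power2_eq_square algebra_simps)
  also have "\<dots> = 4 * ((2 * k + 1) * (2 * k + 3)) * (b^2 * (2 * k + 1))"
    unfolding b_def b'_def central_binomial_Suc by (simp add: power2_eq_square algebra_simps)
  also have "\<dots> \<le> 4 * (2 * k + 2)^2 * 16 ^ k"
    using Suc.IH unfolding b_def by (intro mult_mono) (auto simp: power2_eq_square algebra_simps)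
  also have "\<dots> = (Suc k)^2 * 16 ^ Suc k"
    by (simp add: power2_eq_square algebra_simps)
  finally show ?case
    unfolding b'_def by simp
qed simp

lemma central_binomial_sq_mult_le: "(d choose (d div 2))^2 * d \<le> 4 ^ d"
proof (cases "even d")
  case True
  then obtain k where "d = 2 * k" by blast
  then show ?thesis
    using central_binomial_sq_le[of k] by (simp add: power_mult)
next
  case False
  then obtain k where d: "d = 2 * k + 1" using oddE by blast
  define c where "c = d choose (d div 2)"
  have "(2 * Suc k) choose Suc k = 2 * c"
    unfolding c_def using d central_binomial_odd[of d] by simp
  then have "(2 * c)^2 * (2 * Suc k + 1) \<le> 16 ^ Suc k"
    using central_binomial_sq_le[of "Suc k"] by simp
  moreover have "(16::nat) ^ Suc k = 4 * 4 ^ d"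
    using d by (simp add: power_mult)
  moreover have "4 * (c^2 * d) \<le> 4 * (c^2 * (2 * k + 3))"
    using d by (intro mult_le_mono2) simp
  moreover have "(2 * c)^2 * (2 * Suc k + 1) = 4 * (c^2 * (2 * k + 3))"
    by (simp add: power_mult_distrib algebra_simps)
  ultimately show ?thesis
    unfolding c_def by linarith
qed

section \<open>Hamming distance between sets\<close>

abbreviation hamming_dist :: "'a set \<Rightarrow> 'a set \<Rightarrow> nat" where
  "hamming_dist X Y \<equiv> card (sym_diff X Y)"

lemma hamming_dist_le_card: "finite U \<Longrightarrow> X \<subseteq> U \<Longrightarrow> Y \<subseteq> U \<Longrightarrow> hamming_dist X Y \<le> card U"
  by (intro card_mono) auto

lemma card_sym_diff:
  assumes "finite A" "finite B"
  shows "card (sym_diff A B) + 2 * card (A \<inter> B) = card A + card B"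
proof -
  have "card (sym_diff A B) = card (A - B) + card (B - A)"
    using assms by (intro card_Un_disjoint) auto
  moreover have "card A = card (A - B) + card (A \<inter> B)" "card B = card (B - A) + card (A \<inter> B)"
    using assms by (simp_all add: card_Diff_subset_Int Int_commute card_mono)
  ultimately show ?thesis by simp
qed

lemma hamming_dist_diff:
  assumes "finite X" "finite X'" "finite Y"
  shows "int (hamming_dist X Y) - int (hamming_dist X' Y)
           = int (hamming_dist X X') - 2 * int (card (sym_diff X X' \<inter> sym_diff X' Y))"
proof -
  have "sym_diff X Y = sym_diff (sym_diff X X') (sym_diff X' Y)"
    by blast
  then show ?thesis
    using card_sym_diff[of "sym_diff X X'" "sym_diff X' Y"] assms by simp
qed

lemma card_Pow_sym_diff_Int_eq_le:
  assumes "finite U" "X \<subseteq> U" "D \<subseteq> U"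
  shows "card {Y \<in> Pow U. card (D \<inter> sym_diff X Y) = j} \<le> (card D choose j) * 2 ^ (card U - card D)"
proof -
  let ?F = "\<lambda>Y. (D \<inter> sym_diff X Y, sym_diff X Y - D)"
  have "inj_on ?F (Pow U)"
    by (rule inj_onI) blast
  moreover have "?F ` {Y \<in> Pow U. card (D \<inter> sym_diff X Y) = j} \<subseteq> {B. B \<subseteq> D \<and> card B = j} \<times> Pow (U - D)"
    using assms(2) by auto
  moreover have "finite {B. B \<subseteq> D \<and> card B = j}"
    by (rule finite_subset[of _ "Pow D"]) (use assms finite_subset in auto)
  ultimately have "card {Y \<in> Pow U. card (D \<inter> sym_diff X Y) = j}
      \<le> card ({B. B \<subseteq> D \<and> card B = j} \<times> Pow (U - D))"
    using assms(1) by (intro card_inj_on_le) (auto intro: inj_on_subset)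
  also have "\<dots> = (card D choose j) * 2 ^ (card U - card D)"
    using assms by (simp add: card_cartesian_product n_subsets card_Pow card_Diff_subset finite_subset)
  finally show ?thesis .
qed

(* By hamming_dist_diff the difference equals d - 2 j, where j = card (D \<inter> (X' \<triangle> Y)) and
   D = X \<triangle> X'; so at most T + 1 values of j qualify, each for at most
   (d choose d div 2) * 2 ^ (card U - d) sets Y. *)
lemma card_hamming_dist_close_le:
  assumes "finite U" "X \<subseteq> U" "X' \<subseteq> U"
  defines "d \<equiv> hamming_dist X X'"
  shows "card {Y \<in> Pow U. \<bar>int (hamming_dist X Y) - int (hamming_dist X' Y)\<bar> \<le> int T}
           \<le> (T + 1) * (d choose (d div 2)) * 2 ^ (card U - d)"
proof -
  let ?D = "sym_diff X X'"
  let ?J = "{(d - T) div 2 .. (d + T) div 2}"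
  have fin: "finite X" "finite X'" "?D \<subseteq> U"
    using assms finite_subset by auto
  have "{Y \<in> Pow U. \<bar>int (hamming_dist X Y) - int (hamming_dist X' Y)\<bar> \<le> int T}
          \<subseteq> (\<Union>j\<in>?J. {Y \<in> Pow U. card (?D \<inter> sym_diff X' Y) = j})"
  proof
    fix Y assume "Y \<in> {Y \<in> Pow U. \<bar>int (hamming_dist X Y) - int (hamming_dist X' Y)\<bar> \<le> int T}"
    then have Y: "Y \<subseteq> U" "\<bar>int (hamming_dist X Y) - int (hamming_dist X' Y)\<bar> \<le> int T"
      by auto
    then have "finite Y"
      using assms(1) finite_subset by blast
    have "\<bar>int d - 2 * int (card (?D \<inter> sym_diff X' Y))\<bar> \<le> int T"
      using Y(2) unfolding d_def hamming_dist_diff[OF fin(1,2) \<open>finite Y\<close>] .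
    then show "Y \<in> (\<Union>j\<in>?J. {Y \<in> Pow U. card (?D \<inter> sym_diff X' Y) = j})"
      using Y by auto
  qed
  then have "card {Y \<in> Pow U. \<bar>int (hamming_dist X Y) - int (hamming_dist X' Y)\<bar> \<le> int T}
          \<le> card (\<Union>j\<in>?J. {Y \<in> Pow U. card (?D \<inter> sym_diff X' Y) = j})"
    using assms(1) by (intro card_mono) auto
  also have "\<dots> \<le> (\<Sum>j\<in>?J. card {Y \<in> Pow U. card (?D \<inter> sym_diff X' Y) = j})"
    by (rule card_UN_le) simp
  also have "\<dots> \<le> (\<Sum>j\<in>?J. (d choose (d div 2)) * 2 ^ (card U - d))"
    using card_Pow_sym_diff_Int_eq_le[OF assms(1,3) fin(3)] binomial_maximum
    unfolding d_def by (intro sum_mono) (meson le_trans mult_le_mono1)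
  also have "\<dots> = card ?J * ((d choose (d div 2)) * 2 ^ (card U - d))"
    by simp
  also have "\<dots> \<le> (T + 1) * (d choose (d div 2)) * 2 ^ (card U - d)"
    unfolding mult.assoc by (rule mult_le_mono1) simp
  finally show ?thesis .
qed

lemma hamming_dist_le_if_many_close:
  assumes "finite U" "X \<subseteq> U" "X' \<subseteq> U"
    and many: "2 ^ card U \<le> K * card {Y \<in> Pow U. \<bar>int (hamming_dist X Y) - int (hamming_dist X' Y)\<bar> \<le> int T}"
  shows "hamming_dist X X' \<le> K^2 * (T + 1)^2"
proof -
  define d where "d = hamming_dist X X'"
  have "d \<le> card U"
    unfolding d_def using assms(1-3) by (rule hamming_dist_le_card)
  define b where "b = d choose (d div 2)"
  have "2 ^ d * 2 ^ (card U - d) = (2::nat) ^ card U"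
    using \<open>d \<le> card U\<close> by (simp flip: power_add)
  also have "\<dots> \<le> K * ((T + 1) * b * 2 ^ (card U - d))"
    using many card_hamming_dist_close_le[OF assms(1-3), of T] unfolding d_def b_def
    by (meson le_trans mult_le_mono2)
  also have "\<dots> = (K * (T + 1) * b) * 2 ^ (card U - d)"
    by (simp only: mult.assoc)
  finally have "2 ^ d \<le> K * (T + 1) * b"
    by simp
  then have "(2 ^ d)^2 \<le> (K * (T + 1) * b)^2"
    by (intro power_mono) simp_all
  moreover have "(2 ^ d)^2 = (4::nat) ^ d"
    by (simp add: power2_eq_square flip: power_mult_distrib)
  ultimately have "4 ^ d \<le> K^2 * (T + 1)^2 * b^2"
    by (simp only: power_mult_distrib)
  then have "4 ^ d * d \<le> K^2 * (T + 1)^2 * (b^2 * d)"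
    using mult_le_mono1 by (simp only: mult.assoc[symmetric])
  also have "\<dots> \<le> K^2 * (T + 1)^2 * 4 ^ d"
    using central_binomial_sq_mult_le[of d] unfolding b_def by simp
  finally show ?thesis
    unfolding d_def by simp
qed

lemma card_hamming_ball_le:
  assumes "finite U" "k \<le> card U"
  shows "4 ^ card U * card {Z \<in> Pow U. card Z \<le> k} \<le> 4 ^ k * 5 ^ card U"
proof -
  let ?n = "card U"
  have "{Z \<in> Pow U. card Z \<le> k} = (\<Union>j\<le>k. {Z. Z \<subseteq> U \<and> card Z = j})"
    by auto
  then have "card {Z \<in> Pow U. card Z \<le> k} \<le> (\<Sum>j\<le>k. card {Z. Z \<subseteq> U \<and> card Z = j})"
    by (simp add: card_UN_le)
  also have "\<dots> = (\<Sum>j\<le>k. ?n choose j)"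
    using assms(1) by (simp add: n_subsets)
  finally have "4 ^ ?n * card {Z \<in> Pow U. card Z \<le> k} \<le> 4 ^ ?n * (\<Sum>j\<le>k. ?n choose j)"
    by simp
  also have "\<dots> = (\<Sum>j\<le>k. (?n choose j) * 4 ^ ?n)"
    by (simp add: sum_distrib_right mult.commute)
  also have "\<dots> \<le> (\<Sum>j\<le>k. 4 ^ k * ((?n choose j) * 4 ^ (?n - j)))"
  proof (rule sum_mono)
    fix j assume "j \<in> {..k}"
    then have "4 ^ ?n \<le> (4::nat) ^ k * 4 ^ (?n - j)"
      by (simp flip: power_add)
    then show "(?n choose j) * 4 ^ ?n \<le> 4 ^ k * ((?n choose j) * 4 ^ (?n - j))"
      by (metis mult.left_commute mult_le_mono2)
  qed
  also have "\<dots> \<le> 4 ^ k * (\<Sum>j\<le>?n. (?n choose j) * 4 ^ (?n - j))"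
    using assms(2) by (simp add: sum_distrib_left sum_mono2)
  also have "(\<Sum>j\<le>?n. (?n choose j) * 4 ^ (?n - j)) = 5 ^ ?n"
    using binomial_ring[of "1::nat" 4 ?n] by simp
  finally show ?thesis .
qed

lemma card_le_card_image_mult_card_ball:
  assumes "finite U" "G \<subseteq> Pow U"
    and close: "\<And>X X'. X \<in> G \<Longrightarrow> X' \<in> G \<Longrightarrow> f X = f X' \<Longrightarrow> hamming_dist X X' \<le> k"
  shows "card G \<le> card (f ` G) * card {Z \<in> Pow U. card Z \<le> k}"
proof -
  have fiber: "card {X \<in> G. f X = f X0} \<le> card {Z \<in> Pow U. card Z \<le> k}" if "X0 \<in> G" for X0
  proof (rule card_inj_on_le)
    show "inj_on (\<lambda>X. sym_diff X X0) {X \<in> G. f X = f X0}"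
      by (rule inj_onI) blast
    show "(\<lambda>X. sym_diff X X0) ` {X \<in> G. f X = f X0} \<subseteq> {Z \<in> Pow U. card Z \<le> k}"
      using close that assms(2) by auto
  qed (simp add: assms(1))
  have "G = (\<Union>\<sigma>\<in>f ` G. {X \<in> G. f X = \<sigma>})"
    by auto
  moreover have "finite (f ` G)"
    using assms(1,2) by (meson finite_Pow_iff finite_imageI finite_subset)
  ultimately have "card G \<le> (\<Sum>\<sigma>\<in>f ` G. card {X \<in> G. f X = \<sigma>})"
    by (metis card_UN_le)
  also have "\<dots> \<le> (\<Sum>\<sigma>\<in>f ` G. card {Z \<in> Pow U. card Z \<le> k})"
    using fiber by (intro sum_mono) auto
  also have "\<dots> = card (f ` G) * card {Z \<in> Pow U. card Z \<le> k}"
    by simp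
  finally show ?thesis .
qed

section \<open>One-way communication of gap Hamming distance\<close>

lemma card_dense_rows_ge:
  assumes "finite P" "finite Q"
    and dense: "2/3 * (card P * card Q) \<le> real (card (SIGMA x:P. {y \<in> Q. R x y}))"
  shows "card P \<le> 6 * card {x \<in> P. 3 * card Q \<le> 5 * card {y \<in> Q. R x y}}"
proof -
  define G where "G = {x \<in> P. 3 * card Q \<le> 5 * card {y \<in> Q. R x y}}"
  define q where "q = real (card Q)"
  have "G \<subseteq> P" "finite G"
    using assms(1) unfolding G_def by auto
  have row: "real (card {y \<in> Q. R x y}) \<le> (if x \<in> G then q else 3/5 * q)" if "x \<in> P" for x
    using card_mono[OF assms(2), of "{y \<in> Q. R x y}"] that unfolding G_def q_def by auto
  have "2/3 * (card P * q) \<le> (\<Sum>x\<in>P. real (card {y \<in> Q. R x y}))"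
    using dense assms unfolding q_def by (simp add: card_SigmaI)
  also have "\<dots> \<le> (\<Sum>x\<in>P. if x \<in> G then q else 3/5 * q)"
    by (intro sum_mono row)
  also have "\<dots> = card G * q + (real (card P) - card G) * (3/5 * q)"
    using \<open>G \<subseteq> P\<close> assms(1) card_mono[OF assms(1) \<open>G \<subseteq> P\<close>]
    by (simp add: sum.If_cases Int_absorb1 Diff_eq[symmetric] card_Diff_subset \<open>finite G\<close> of_nat_diff)
  finally have "q * card P \<le> q * (6 * card G)"
    by (simp add: field_simps)
  moreover have "G = P" if "q = 0"
    using that assms(2) unfolding G_def q_def by auto
  ultimately show ?thesis
    unfolding G_def q_def by (cases "q = 0") (auto simp: mult_le_cancel_left)
qed

(* The hypotheses give (8/5)^m \<le> 6 * 2^(3m/8); raising to the eighth power keeps this in nat. *)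
lemma exp_bounds_imp_less_10:
  fixes m s k V :: nat
  assumes "2 ^ m \<le> 6 * (2 ^ s * V)" "4 ^ m * V \<le> 4 ^ k * 5 ^ m" "4 * s \<le> m" "16 * k \<le> m"
  shows "m < 10"
proof -
  have "(8::nat) ^ m = 4 ^ m * 2 ^ m"
    by (simp flip: power_mult_distrib)
  also have "\<dots> \<le> 4 ^ m * (6 * (2 ^ s * V))"
    using assms(1) by (rule mult_le_mono2)
  also have "\<dots> = 6 * 2 ^ s * (4 ^ m * V)"
    by (simp only: ac_simps)
  also have "\<dots> \<le> 6 * 2 ^ s * (4 ^ k * 5 ^ m)"
    using assms(2) by (rule mult_le_mono2)
  finally have "((8::nat) ^ m) ^ 8 \<le> (6 * (2 ^ s * 4 ^ k) * 5 ^ m) ^ 8"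
    by (intro power_mono) (simp_all only: ac_simps)
  also have "\<dots> = 6 ^ 8 * (2 ^ s * 4 ^ k) ^ 8 * (5 ^ 8) ^ m"
    by (simp only: power_mult_distrib flip: power_mult) (simp only: mult.commute)
  also have "(2 ^ s * 4 ^ k) ^ 8 \<le> (8::nat) ^ m"
  proof -
    have "(4::nat) ^ k = 2 ^ (2 * k)"
      by (simp add: power_mult)
    then have "(2 ^ s * 4 ^ k) ^ 8 = (2::nat) ^ ((s + 2 * k) * 8)"
      by (simp only: power_add power_mult)
    also have "\<dots> = 2 ^ (8 * s + 16 * k)"
      by (simp add: algebra_simps)
    also have "\<dots> \<le> 2 ^ (3 * m)"
      using assms(3,4) by (intro power_increasing) auto
    finally show ?thesis
      by (simp add: power_mult)
  qed
  finally have "(8::nat) ^ m * (8 ^ 7) ^ m \<le> 8 ^ m * (6 ^ 8 * (5 ^ 8) ^ m)"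
    by (simp only: ac_simps flip: power_mult power_add) (simp add: mult.commute)
  then have "(8 ^ 7) ^ m \<le> 6 ^ 8 * ((5::nat) ^ 8) ^ m"
    by simp
  moreover have "5 ^ m * (5 ^ 8) ^ m \<le> ((8::nat) ^ 7) ^ m"
    by (simp only: power_mult_distrib[symmetric]) (rule power_mono; simp)
  ultimately have "5 ^ m * (5 ^ 8) ^ m \<le> 6 ^ 8 * ((5::nat) ^ 8) ^ m"
    by (rule le_trans[rotated])
  then have "(5::nat) ^ m < 5 ^ 10"
    by simp
  then show ?thesis
    by (subst (asm) power_strict_increasing_iff) simp_all
qed

lemma hamming_dist_le_if_common_dense_rows:
  assumes "finite U" "X \<subseteq> U" "X' \<subseteq> U"
    and "3 * 2 ^ card U \<le> 5 * card {Y \<in> Pow U. ok X Y}" "3 * 2 ^ card U \<le> 5 * card {Y \<in> Pow U. ok X' Y}"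
    and consistent: "\<And>Y. Y \<subseteq> U \<Longrightarrow> ok X Y \<Longrightarrow> ok X' Y \<Longrightarrow>
        \<bar>int (hamming_dist X Y) - int (hamming_dist X' Y)\<bar> \<le> int T"
  shows "hamming_dist X X' \<le> 25 * (T + 1)^2"
proof -
  let ?A = "{Y \<in> Pow U. ok X Y}" and ?B = "{Y \<in> Pow U. ok X' Y}"
  have "card ?A + card ?B = card (?A \<union> ?B) + card (?A \<inter> ?B)"
    using assms(1) by (intro card_Un_Int) auto
  moreover have "card (?A \<union> ?B) \<le> 2 ^ card U"
    using assms(1) card_mono[of "Pow U" "?A \<union> ?B"] by (auto simp: card_Pow)
  ultimately have "2 ^ card U \<le> 5 * card (?A \<inter> ?B)"
    using assms(4,5) by linarith
  also have "\<dots> \<le> 5 * card {Y \<in> Pow U. \<bar>int (hamming_dist X Y) - int (hamming_dist X' Y)\<bar> \<le> int T}"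
    using consistent assms(1) by (intro mult_le_mono2 card_mono) auto
  finally have "hamming_dist X X' \<le> 5^2 * (T + 1)^2"
    by (rule hamming_dist_le_if_many_close[OF assms(1-3)])
  then show ?thesis
    by simp
qed

lemma less_four_mul_if_covered_by_balls:
  assumes "finite U"
    and covered: "2 ^ card U \<le> 6 * (2 ^ s * card {Z \<in> Pow U. card Z \<le> card U div 16})"
    and "10 \<le> card U"
  shows "card U < 4 * s"
proof (rule ccontr)
  assume "\<not> card U < 4 * s"
  then have "4 * s \<le> card U"
    by simp
  moreover have "4 ^ card U * card {Z \<in> Pow U. card Z \<le> card U div 16} \<le> 4 ^ (card U div 16) * 5 ^ card U"
    using assms(1) by (rule card_hamming_ball_le) simp
  ultimately have "card U < 10"
    using exp_bounds_imp_less_10[OF covered] by simp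
  then show False
    using assms(3) by simp
qed

lemma one_way_gap_hamming_lower_bound:
  fixes f :: "'a set \<Rightarrow> 'b"
  assumes "finite U"
    and messages: "card (f ` Pow U) \<le> 2 ^ s"
    and dense: "2/3 * 4 ^ card U \<le> real (card (SIGMA X:Pow U. {Y \<in> Pow U. ok X Y}))"
    and consistent: "\<And>X X' Y. X \<subseteq> U \<Longrightarrow> X' \<subseteq> U \<Longrightarrow> Y \<subseteq> U \<Longrightarrow> f X = f X' \<Longrightarrow>
        ok X Y \<Longrightarrow> ok X' Y \<Longrightarrow> \<bar>int (hamming_dist X Y) - int (hamming_dist X' Y)\<bar> \<le> int T"
    and large: "400 * (T + 1)^2 < card U"
  shows "card U < 4 * s"
proof -
  define G where "G = {X \<in> Pow U. 3 * 2 ^ card U \<le> 5 * card {Y \<in> Pow U. ok X Y}}"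
  have "G \<subseteq> Pow U"
    unfolding G_def by blast
  have "real (card (Pow U)) * real (card (Pow U)) = 4 ^ card U"
    using assms(1) by (simp add: card_Pow flip: power_mult_distrib)
  then have many: "2 ^ card U \<le> 6 * card G"
    using card_dense_rows_ge[of "Pow U" "Pow U" ok] dense assms(1)
    unfolding G_def by (simp add: card_Pow)
  have close: "hamming_dist X X' \<le> card U div 16" if "X \<in> G" "X' \<in> G" "f X = f X'" for X X'
  proof -
    have "X \<subseteq> U" "X' \<subseteq> U"
      "3 * 2 ^ card U \<le> 5 * card {Y \<in> Pow U. ok X Y}" "3 * 2 ^ card U \<le> 5 * card {Y \<in> Pow U. ok X' Y}"
      using that(1,2) unfolding G_def by auto
    moreover have "\<bar>int (hamming_dist X Y) - int (hamming_dist X' Y)\<bar> \<le> int T"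
      if "Y \<subseteq> U" "ok X Y" "ok X' Y" for Y
      using consistent[OF calculation(1,2) that(1) \<open>f X = f X'\<close> that(2,3)] .
    ultimately have "hamming_dist X X' \<le> 25 * (T + 1)^2"
      by (rule hamming_dist_le_if_common_dense_rows[OF assms(1)])
    then have "hamming_dist X X' * 16 \<le> card U"
      using large by linarith
    then show ?thesis
      by (simp add: less_eq_div_iff_mult_less_eq)
  qed
  have "card (f ` G) \<le> 2 ^ s"
    using assms(1) \<open>G \<subseteq> Pow U\<close> by (meson card_mono finite_Pow_iff finite_imageI image_mono le_trans messages)
  moreover have "card G \<le> card (f ` G) * card {Z \<in> Pow U. card Z \<le> card U div 16}"
    using assms(1) \<open>G \<subseteq> Pow U\<close> close by (rule card_le_card_image_mult_card_ball)
  ultimately have "2 ^ card U \<le> 6 * (2 ^ s * card {Z \<in> Pow U. card Z \<le> card U div 16})"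
    using many by (meson le_trans mult_le_mono1 mult_le_mono2)
  moreover have "10 \<le> card U"
    using large by (simp add: power2_eq_square)
  ultimately show ?thesis
    by (rule less_four_mul_if_covered_by_balls[OF assms(1)])
qed

section \<open>Indicator streams\<close>

lemma count_list_distinct: "distinct xs \<Longrightarrow> count_list xs x = (if x \<in> set xs then 1 else 0)"
  by (induction xs) auto

(* Position k < C lies in block k div L and contributes the item 2 k, or 2 k + 1 if its block
   belongs to X.  For X \<subseteq> {..<m} the positions from m * L on never carry a 1: they are padding. *)
definition indicator_stream :: "nat \<Rightarrow> nat \<Rightarrow> nat set \<Rightarrow> nat list" where
  "indicator_stream C L X = map (\<lambda>k. 2 * k + (if k div L \<in> X then 1 else 0)) [0..<C]"

lemma distinct_indicator_stream: "distinct (indicator_stream C L X)"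
  unfolding indicator_stream_def distinct_map by (auto intro!: inj_onI split: if_splits)

lemma card_set_indicator_stream: "card (set (indicator_stream C L X)) = C"
  using distinct_card[OF distinct_indicator_stream] by (simp add: indicator_stream_def)

lemma set_indicator_stream_subset: "set (indicator_stream C L X) \<subseteq> {..<2 * C}"
  by (auto simp: indicator_stream_def)

lemma count_list_indicator_stream:
  "count_list (indicator_stream C L X) x = (if x \<in> set (indicator_stream C L X) then 1 else 0)"
  using distinct_indicator_stream by (rule count_list_distinct)

lemma
  fixes C L :: nat and X Y :: "nat set"
  defines "xs \<equiv> indicator_stream C L X" and "ys \<equiv> indicator_stream C L Y"
  shows num_heavy_indicator_streams: "num_heavy (xs @ xs @ ys) = C"
    and F0_indicator_streams_eq: "F0 (xs @ xs @ ys) = C + card (set ys - set xs)"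
proof -
  have freq: "freq (xs @ xs @ ys) x
      = 2 * (if x \<in> set xs then 1 else 0) + (if x \<in> set ys then 1 else 0)" for x
    unfolding freq_def xs_def ys_def by (simp add: count_list_indicator_stream)
  have "{x. 1 < freq (xs @ xs @ ys) x} = set xs"
    by (auto simp: freq)
  then show "num_heavy (xs @ xs @ ys) = C"
    unfolding num_heavy_def xs_def by (simp add: card_set_indicator_stream)
  have "{x. freq (xs @ xs @ ys) x \<noteq> 0} = set xs \<union> set ys"
    by (auto simp: freq)
  moreover have "card (set xs \<union> set ys) = card (set xs) + card (set ys - set xs)"
    using card_Un_disjoint[of "set xs" "set ys - set xs"] by simp
  ultimately show "F0 (xs @ xs @ ys) = C + card (set ys - set xs)"
    unfolding F0_def xs_def by (simp add: card_set_indicator_stream)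
qed

lemma double_plus_bit_eq_iff:
  "2 * k + (if P then 1 else 0) = 2 * k' + (if Q then 1 else (0::nat)) \<longleftrightarrow> k = k' \<and> (P \<longleftrightarrow> Q)"
  by (cases P; cases Q) presburger+

lemma card_div_preimage:
  assumes "0 < L" "finite D"
  shows "card {k. k div L \<in> D} = L * card D"
proof -
  have "bij_betw (\<lambda>k. (k div L, k mod L)) {k. k div L \<in> D} (D \<times> {..<L})"
    by (rule bij_betwI[where g = "\<lambda>(i, j). i * L + j"]) (use assms(1) in auto)
  then show ?thesis
    using assms(2) by (simp add: bij_betw_same_card card_cartesian_product)
qed

lemma set_indicator_stream_diff:
  "set (indicator_stream C L Y) - set (indicator_stream C L X)
     = (\<lambda>k. 2 * k + (if k div L \<in> Y then 1 else 0)) ` {k. k < C \<and> k div L \<in> sym_diff X Y}"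
  (is "?B - ?A = ?g ` ?K")
proof (intro equalityI subsetI)
  fix x assume x: "x \<in> ?B - ?A"
  then obtain k where k: "k < C" "x = ?g k"
    unfolding indicator_stream_def by auto
  then have "2 * k + (if k div L \<in> X then 1 else 0) \<in> ?A"
    unfolding indicator_stream_def by auto
  moreover have "?g k \<notin> ?A"
    using x k(2) by blast
  ultimately have "?g k \<noteq> 2 * k + (if k div L \<in> X then 1 else 0)"
    by force
  then have "k div L \<in> sym_diff X Y"
    by (auto split: if_splits)
  then show "x \<in> ?g ` ?K"
    using k by blast
next
  fix x assume "x \<in> ?g ` ?K"
  then obtain k where k: "k < C" "k div L \<in> sym_diff X Y" "x = ?g k"
    by blast
  then have "x \<in> ?B"
    unfolding indicator_stream_def by auto
  moreover have "x \<notin> ?A"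
  proof
    assume "x \<in> ?A"
    then obtain k' where "x = 2 * k' + (if k' div L \<in> X then 1 else 0)"
      unfolding indicator_stream_def by auto
    then have "2 * k' + (if k' div L \<in> X then 1 else 0) = ?g k"
      using k(3) by simp
    then show False
      using k(2) unfolding double_plus_bit_eq_iff by auto
  qed
  ultimately show "x \<in> ?B - ?A"
    by blast
qed

lemma card_set_indicator_stream_diff:
  assumes "X \<subseteq> {..<m}" "Y \<subseteq> {..<m}" "m * L \<le> C" "0 < L"
  shows "card (set (indicator_stream C L Y) - set (indicator_stream C L X)) = L * hamming_dist X Y"
proof -
  have bound: "k < C" if "k div L \<in> sym_diff X Y" for k
  proof -
    have "k div L < m"
      using that assms(1,2) by auto
    then show ?thesis
      using assms(3,4) by (metis div_less_iff_less_mult less_le_trans mult.commute)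
  qed
  have "inj (\<lambda>k. 2 * k + (if k div L \<in> Y then 1 else 0 :: nat))"
    by (rule injI) (simp add: double_plus_bit_eq_iff)
  then have "inj_on (\<lambda>k. 2 * k + (if k div L \<in> Y then 1 else 0 :: nat)) {k. k < C \<and> k div L \<in> sym_diff X Y}"
    by (rule inj_on_subset) simp
  then have "card (set (indicator_stream C L Y) - set (indicator_stream C L X))
      = card {k. k < C \<and> k div L \<in> sym_diff X Y}"
    unfolding set_indicator_stream_diff by (rule card_image)
  also have "{k. k < C \<and> k div L \<in> sym_diff X Y} = {k. k div L \<in> sym_diff X Y}"
    using bound by blast
  also have "card \<dots> = L * hamming_dist X Y"
    using assms(1,2,4) by (intro card_div_preimage) (auto intro: finite_subset)
  finally show ?thesis .
qed

lemma F0_indicator_streams: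
  assumes "X \<subseteq> {..<m}" "Y \<subseteq> {..<m}" "m * L \<le> C" "0 < L"
  shows "F0 (indicator_stream C L X @ indicator_stream C L X @ indicator_stream C L Y)
           = C + L * hamming_dist X Y"
  unfolding F0_indicator_streams_eq card_set_indicator_stream_diff[OF assms] ..

section \<open>Streaming algorithms\<close>

lemma length_fold_upd:
  assumes "uses_space R init upd n s" "r \<in> set_pmf R" "set xs \<subseteq> {..<n}" "length st = s"
  shows "length (fold (upd r) xs st) = s"
  using assms(3,4)
proof (induction xs arbitrary: st)
  case (Cons x xs)
  then show ?case
    using assms(1,2) by (simp add: uses_space_def)
qed simp

lemma length_run_stream:
  assumes "uses_space R init upd n s" "r \<in> set_pmf R" "set xs \<subseteq> {..<n}"
  shows "length (run_stream init upd r xs) = s"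
  unfolding run_stream_def using assms by (intro length_fold_upd) (auto simp: uses_space_def)

lemma run_stream_append:
  "run_stream init upd r (xs @ ys) = fold (upd r) ys (run_stream init upd r xs)"
  unfolding run_stream_def by simp

lemma card_image_le_two_pow:
  fixes f :: "'a \<Rightarrow> bool list"
  assumes "\<And>x. x \<in> A \<Longrightarrow> length (f x) = s"
  shows "card (f ` A) \<le> 2 ^ s"
proof -
  have "card (f ` A) \<le> card {bs. set bs \<subseteq> (UNIV :: bool set) \<and> length bs = s}"
    using assms by (intro card_mono finite_lists_length_eq) auto
  then show ?thesis
    using card_lists_length_eq[of "UNIV :: bool set" s] by simp
qed

lemma exists_set_pmf_card_ge:
  fixes R :: "'r pmf"
  assumes "finite I" and prob: "\<And>i. i \<in> I \<Longrightarrow> c \<le> measure_pmf.prob R {r. P i r}"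
  shows "\<exists>r\<in>set_pmf R. c * card I \<le> card {i \<in> I. P i r}"
proof -
  define F where "F r = (\<Sum>i\<in>I. indicator {r. P i r} r :: real)" for r
  have F_eq: "F r = card {i \<in> I. P i r}" for r
    unfolding F_def indicator_def using assms(1) by (simp add: sum.If_cases Int_def conj_commute)
  have integrable: "integrable (measure_pmf R) (indicator {r. P i r} :: 'r \<Rightarrow> real)" for i
    by (rule integrable_real_indicator) (auto simp: measure_pmf.emeasure_finite less_top[symmetric])
  have "F r \<in> real ` {..card I}" for r
    using card_mono[OF assms(1) Collect_restrict] by (simp add: F_eq)
  then have finite: "finite (F ` set_pmf R)"
    by (meson finite_atMost finite_imageI finite_subset image_subsetI)
  have "c * card I \<le> (\<Sum>i\<in>I. measure_pmf.prob R {r. P i r})"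
    using sum_mono[of I "\<lambda>_. c", OF prob] by (simp add: mult.commute)
  also have "\<dots> = measure_pmf.expectation R F"
    unfolding F_def using integrable by (simp add: Bochner_Integration.integral_sum)
  also have "\<dots> \<le> Max (F ` set_pmf R)"
  proof (rule measure_pmf.integral_le_const)
    show "AE r in measure_pmf R. F r \<le> Max (F ` set_pmf R)"
      using finite by (simp add: AE_measure_pmf_iff)
    show "integrable (measure_pmf R) F"
      unfolding F_def using integrable by (rule Bochner_Integration.integrable_sum)
  qed
  finally show ?thesis
    using Max_in[OF finite] set_pmf_not_empty by (force simp: F_eq)
qed

lemma exists_set_pmf_dense:
  fixes R :: "'r pmf"
  assumes "finite A" and prob: "\<And>x y. x \<in> A \<Longrightarrow> y \<in> A \<Longrightarrow> c \<le> measure_pmf.prob R {r. P r x y}"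
  shows "\<exists>r\<in>set_pmf R. c * (card A * card A) \<le> card (SIGMA x:A. {y \<in> A. P r x y})"
proof -
  have "\<exists>r\<in>set_pmf R. c * card (A \<times> A) \<le> card {p \<in> A \<times> A. P r (fst p) (snd p)}"
    using assms(1) prob by (intro exists_set_pmf_card_ge) auto
  moreover have "{p \<in> A \<times> A. P r (fst p) (snd p)} = (SIGMA x:A. {y \<in> A. P r x y})" for r
    by auto
  ultimately show ?thesis
    by (simp add: card_cartesian_product)
qed

definition estimates_F0 ::
  "('r \<Rightarrow> bool list) \<Rightarrow> ('r \<Rightarrow> nat \<Rightarrow> bool list \<Rightarrow> bool list) \<Rightarrow> ('r \<Rightarrow> bool list \<Rightarrow> real) \<Rightarrow>
   real \<Rightarrow> 'r \<Rightarrow> nat list \<Rightarrow> bool" where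
  "estimates_F0 init upd out eps r xs \<longleftrightarrow>
     (1 - eps) * F0 xs \<le> out r (run_stream init upd r xs) \<and>
     out r (run_stream init upd r xs) \<le> (1 + eps) * F0 xs"

lemma approximates_F0D:
  "approximates_F0 R init upd out n eps C \<Longrightarrow> set xs \<subseteq> {..<n} \<Longrightarrow> num_heavy xs = C \<Longrightarrow>
     2/3 \<le> measure_pmf.prob R {r. estimates_F0 init upd out eps r xs}"
  unfolding approximates_F0_def estimates_F0_def by blast

lemma abs_diff_le_if_same_approximation:
  fixes a b v eps :: real
  assumes "(1 - eps) * a \<le> v" "v \<le> (1 + eps) * a" "(1 - eps) * b \<le> v" "v \<le> (1 + eps) * b"
  shows "\<bar>a - b\<bar> \<le> eps * (a + b)"
  using assms by (simp add: abs_le_iff algebra_simps)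

lemma estimates_F0_same_state:
  assumes "estimates_F0 init upd out eps r xs" "estimates_F0 init upd out eps r ys"
    and "run_stream init upd r xs = run_stream init upd r ys"
  shows "\<bar>real (F0 xs) - real (F0 ys)\<bar> \<le> eps * (real (F0 xs) + real (F0 ys))"
  using assms unfolding estimates_F0_def
  by (intro abs_diff_le_if_same_approximation[where v = "out r (run_stream init upd r ys)"]) simp_all

section \<open>The space lower bound\<close>

lemma approximates_F0_imp_space_pos:
  fixes eps :: real and C K :: nat
  assumes gap: "2 * eps * C < (1 - eps) * K" and "C + K \<le> n"
    and space: "uses_space R init upd n s" and approx: "approximates_F0 R init upd out n eps C"
  shows "0 < s"
proof (rule ccontr)
  assume "\<not> 0 < s"
  define xs where "xs b = [0..<C] @ [0..<C] @ (if b then [C..<C + K] else [])" for b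
  have freq: "freq (xs b) i = (if i < C then 2 else if b \<and> C \<le> i \<and> i < C + K then 1 else 0)" for b i
    unfolding freq_def xs_def by (cases b) (auto simp: count_list_distinct)
  have "{i. 1 < freq (xs b) i} = {..<C}" "{i. freq (xs b) i \<noteq> 0} = {..<C + (if b then K else 0)}" for b
    by (auto simp: freq)
  then have heavy: "num_heavy (xs b) = C" and F0: "F0 (xs b) = C + (if b then K else 0)" for b
    unfolding num_heavy_def F0_def by simp_all
  have valid: "set (xs b) \<subseteq> {..<n}" for b
    using assms(2) by (auto simp: xs_def)
  have finite: "finite (UNIV :: bool set)"
    by simp
  obtain r where r: "r \<in> set_pmf R"
    and "2/3 * card (UNIV :: bool set) \<le> card {b \<in> UNIV. estimates_F0 init upd out eps r (xs b)}"
    using exists_set_pmf_card_ge[where P = "\<lambda>b r. estimates_F0 init upd out eps r (xs b)",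
        OF finite approximates_F0D[OF approx valid heavy]]
    by blast
  then have "{b \<in> UNIV. estimates_F0 init upd out eps r (xs b)} = UNIV"
    using card_mono[of "UNIV :: bool set" "{b \<in> UNIV. estimates_F0 init upd out eps r (xs b)}"]
    by (intro card_subset_eq) auto
  moreover have "run_stream init upd r (xs b) = []" for b
    using length_run_stream[OF space r valid] \<open>\<not> 0 < s\<close> by simp
  ultimately have "\<bar>real (F0 (xs False)) - real (F0 (xs True))\<bar>
      \<le> eps * (real (F0 (xs False)) + real (F0 (xs True)))"
    by (intro estimates_F0_same_state) auto
  then show False
    using gap unfolding F0 by (simp add: algebra_simps)
qed

lemma le_two_mult_div:
  fixes C m :: nat
  assumes "0 < m" "m \<le> C"
  shows "C \<le> 2 * m * (C div m)"
proof -
  have "C = m * (C div m) + C mod m" "C mod m < m"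
    using assms(1) by simp_all
  moreover have "0 < C div m"
    using assms by (simp add: div_greater_zero_iff)
  then have "m \<le> m * (C div m)"
    by simp
  ultimately show ?thesis
    by linarith
qed

lemma hamming_dist_gap_le_if_same_estimate:
  fixes eps :: real and C L m h h' :: nat
  assumes "0 \<le> eps" "0 < L" "m * L \<le> C" "C \<le> 2 * m * L" "h \<le> m" "h' \<le> m"
    and close: "\<bar>real (C + L * h) - real (C + L * h')\<bar> \<le> eps * (real (C + L * h) + real (C + L * h'))"
  shows "\<bar>int h - int h'\<bar> \<le> int (nat \<lfloor>8 * eps * m\<rfloor>)"
proof -
  have "L * h \<le> C" "L * h' \<le> C"
    using assms(3,5,6) by (metis le_trans mult.commute mult_le_mono2)+
  then have "real (L * h) \<le> C" "real (L * h') \<le> C"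
    by (metis of_nat_le_iff)+
  moreover have "real C \<le> 2 * real m * real L"
    using assms(4) by (metis of_nat_le_iff of_nat_mult of_nat_numeral)
  ultimately have "real (C + L * h) + real (C + L * h') \<le> 8 * real m * real L"
    by (simp only: of_nat_add)
  then have "eps * (real (C + L * h) + real (C + L * h')) \<le> eps * (8 * real m * real L)"
    using assms(1) by (rule mult_left_mono)
  moreover have "real (C + L * h) - real (C + L * h') = real L * (real h - real h')"
    by (simp add: algebra_simps)
  ultimately have "real L * \<bar>real h - real h'\<bar> \<le> real L * (8 * eps * m)"
    using close by (simp add: abs_mult mult_ac)
  then have "\<bar>real h - real h'\<bar> \<le> 8 * eps * m"
    using assms(2) by simp
  then have "\<bar>int h - int h'\<bar> \<le> \<lfloor>8 * eps * m\<rfloor>"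
    by (simp add: le_floor_iff)
  then show ?thesis
    by linarith
qed

lemma hamming_dist_gap_le_if_same_state:
  fixes eps :: real
  assumes "0 \<le> eps" "0 < L" "m * L \<le> C" "C \<le> 2 * m * L" "X \<subseteq> {..<m}" "X' \<subseteq> {..<m}" "Y \<subseteq> {..<m}"
    and same: "run_stream init upd r (indicator_stream C L X @ indicator_stream C L X)
             = run_stream init upd r (indicator_stream C L X' @ indicator_stream C L X')"
    and "estimates_F0 init upd out eps r
           (indicator_stream C L X @ indicator_stream C L X @ indicator_stream C L Y)"
    and "estimates_F0 init upd out eps r
           (indicator_stream C L X' @ indicator_stream C L X' @ indicator_stream C L Y)"
  shows "\<bar>int (hamming_dist X Y) - int (hamming_dist X' Y)\<bar> \<le> int (nat \<lfloor>8 * eps * m\<rfloor>)"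
proof (rule hamming_dist_gap_le_if_same_estimate[where C = C and L = L])
  have "run_stream init upd r (indicator_stream C L Z @ indicator_stream C L Z @ indicator_stream C L Y)
      = fold (upd r) (indicator_stream C L Y)
          (run_stream init upd r (indicator_stream C L Z @ indicator_stream C L Z))" for Z
    using run_stream_append[of init upd r "indicator_stream C L Z @ indicator_stream C L Z"] by simp
  then have "run_stream init upd r (indicator_stream C L X @ indicator_stream C L X @ indicator_stream C L Y)
      = run_stream init upd r (indicator_stream C L X' @ indicator_stream C L X' @ indicator_stream C L Y)"
    by (simp only: same)
  with assms(9,10) show "\<bar>real (C + L * hamming_dist X Y) - real (C + L * hamming_dist X' Y)\<bar>
      \<le> eps * (real (C + L * hamming_dist X Y) + real (C + L * hamming_dist X' Y))"
    unfolding F0_indicator_streams[OF assms(5,7,3,2), symmetric]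
      F0_indicator_streams[OF assms(6,7,3,2), symmetric]
    by (rule estimates_F0_same_state)
  show "hamming_dist X Y \<le> m" "hamming_dist X' Y \<le> m"
    using hamming_dist_le_card[of "{..<m}"] assms(5-7) by simp_all
qed (fact assms)+

lemma approximates_F0_imp_space_gt:
  fixes eps :: real and m C :: nat
  assumes "0 < eps" "0 < m" "m \<le> C" and large: "400 * (nat \<lfloor>8 * eps * m\<rfloor> + 1)^2 < m"
    and "2 * C \<le> n" and space: "uses_space R init upd n s"
    and approx: "approximates_F0 R init upd out n eps C"
  shows "m < 4 * s"
proof -
  define L where "L = C div m"
  have "0 < L" "m * L \<le> C" "C \<le> 2 * m * L"
    using assms(2,3) le_two_mult_div[OF assms(2,3)] times_div_less_eq_dividend[of m C]
    unfolding L_def by (simp_all add: div_greater_zero_iff)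
  define stream where
    "stream X Y = indicator_stream C L X @ indicator_stream C L X @ indicator_stream C L Y" for X Y
  define ok where "ok r X Y \<longleftrightarrow> estimates_F0 init upd out eps r (stream X Y)" for r X Y
  have valid: "set (stream X Y) \<subseteq> {..<n}" for X Y
    using set_indicator_stream_subset assms(5) unfolding stream_def by fastforce
  have "2/3 \<le> measure_pmf.prob R {r. ok r X Y}" for X Y
    unfolding ok_def using approximates_F0D[OF approx valid]
    by (simp add: stream_def num_heavy_indicator_streams)
  then obtain r where r: "r \<in> set_pmf R" and
    "2/3 * (card (Pow {..<m}) * card (Pow {..<m})) \<le> card (SIGMA X:Pow {..<m}. {Y \<in> Pow {..<m}. ok r X Y})"
    using exists_set_pmf_dense[of "Pow {..<m}" "2/3" R ok] by blast
  moreover have "real (card (Pow {..<m}) * card (Pow {..<m})) = 4 ^ card {..<m}"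
    by (simp add: card_Pow flip: power_mult_distrib)
  ultimately have dense: "2/3 * 4 ^ card {..<m} \<le> real (card (SIGMA X:Pow {..<m}. {Y \<in> Pow {..<m}. ok r X Y}))"
    by (simp only: of_nat_mult)
  define f where "f X = run_stream init upd r (indicator_stream C L X @ indicator_stream C L X)" for X
  have messages: "card (f ` Pow {..<m}) \<le> 2 ^ s"
    using length_run_stream[OF space r] valid unfolding f_def stream_def
    by (intro card_image_le_two_pow) fastforce
  have consistent: "\<bar>int (hamming_dist X Y) - int (hamming_dist X' Y)\<bar> \<le> int (nat \<lfloor>8 * eps * m\<rfloor>)"
    if "X \<subseteq> {..<m}" "X' \<subseteq> {..<m}" "Y \<subseteq> {..<m}" "f X = f X'" "ok r X Y" "ok r X' Y" for X X' Y
    using assms(1) \<open>0 < L\<close> \<open>m * L \<le> C\<close> \<open>C \<le> 2 * m * L\<close> that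
    unfolding f_def ok_def stream_def by (intro hamming_dist_gap_le_if_same_state) simp_all
  have large': "400 * (nat \<lfloor>8 * eps * m\<rfloor> + 1)^2 < card {..<m}"
    using large by simp
  have "card {..<m} < 4 * s"
    by (rule one_way_gap_hamming_lower_bound[OF finite_lessThan messages dense _ large'])
      (fact consistent)
  then show ?thesis
    by simp
qed

lemma gap_parameter_large:
  fixes eps :: real and m :: nat
  assumes "0 < eps" "102400 * eps^2 * m \<le> 1" "1600 < m"
  shows "400 * (nat \<lfloor>8 * eps * m\<rfloor> + 1)^2 < m"
proof -
  define T where "T = nat \<lfloor>8 * eps * m\<rfloor>"
  have "real T \<le> 8 * eps * m"
    unfolding T_def using assms(1) by (subst of_nat_nat) auto
  then have "real T ^ 2 \<le> 64 * (eps^2 * m) * m"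
    using power_mono[of "real T" "8 * eps * m" 2] by (simp add: power2_eq_square algebra_simps)
  also have "\<dots> \<le> 64 * (1 / 102400) * m"
    using assms(2) by (intro mult_right_mono mult_left_mono) simp_all
  finally have "real T ^ 2 \<le> m / 1600"
    by simp
  moreover have "(1 + real T)^2 \<le> 2 * real T ^ 2 + 2"
    using sum_squares_bound[of "real T" 1] by (simp add: power2_eq_square algebra_simps)
  moreover have "1600 < real m"
    using assms(3) by simp
  ultimately have "400 * (1 + real T)^2 < real m"
    by linarith
  then have "real (400 * (T + 1)^2) < real m"
    by simp
  then show ?thesis
    unfolding T_def[symmetric] of_nat_less_iff .
qed

lemma gap_parameter_choice:
  fixes eps M :: real and C :: nat
  assumes "0 < eps" and M: "M = min (1 / eps^2) (real C)" and "204800000 \<le> M"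
  defines "m \<equiv> nat \<lfloor>M / 102400\<rfloor>"
  shows "0 < m" "m \<le> C" "400 * (nat \<lfloor>8 * eps * m\<rfloor> + 1)^2 < m" "M < 102400 * (real m + 1)"
proof -
  have m: "M / 102400 - 1 < m" "real m \<le> M / 102400"
    unfolding m_def using assms(3) by linarith+
  then show "M < 102400 * (real m + 1)"
    by simp
  have "1600 < m"
    using m assms(3) by simp
  then show "0 < m"
    by simp
  show "m \<le> C"
    using m(2) assms(3) unfolding M by (simp add: min_def split: if_splits)
  have "102400 * real m \<le> M"
    using m(2) by simp
  then have "102400 * eps^2 * m \<le> eps^2 * M"
    using mult_left_mono[of "102400 * real m" M "eps^2"] by (simp add: mult_ac)
  also have "\<dots> \<le> eps^2 * (1 / eps^2)"
    unfolding M by (intro mult_left_mono) simp_all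
  finally have "102400 * eps^2 * m \<le> 1"
    using assms(1) by simp
  then show "400 * (nat \<lfloor>8 * eps * m\<rfloor> + 1)^2 < m"
    using assms(1) \<open>1600 < m\<close> by (intro gap_parameter_large)
qed

lemma F0_space_lower_bound:
  fixes eps :: real and C :: nat
  assumes "0 < eps" "eps < 1"
  shows "\<exists>N :: nat. \<forall>n \<ge> N. \<forall>(R :: nat pmf) init upd out s.
    uses_space R init upd n s \<and> approximates_F0 R init upd out n eps C \<longrightarrow>
    real s \<ge> 1 / 204800000 * min (1 / eps^2) (real C)"
proof (cases "min (1 / eps^2) (real C) < 204800000")
  case True
  obtain K :: nat where "2 * eps * C / (1 - eps) < K"
    using reals_Archimedean2 by blast
  then have gap: "2 * eps * C < (1 - eps) * K"
    using assms by (simp add: field_simps)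
  have "1 / 204800000 * min (1 / eps^2) (real C) \<le> real s"
    if "C + K \<le> n" "uses_space R init upd n s" "approximates_F0 R init upd out n eps C"
    for n and R :: "nat pmf" and init upd out s
    using approximates_F0_imp_space_pos[OF gap that] True by simp
  then show ?thesis
    by (intro exI[of _ "C + K"]) blast
next
  case False
  define M where "M = min (1 / eps^2) (real C)"
  define m where "m = nat \<lfloor>M / 102400\<rfloor>"
  have "204800000 \<le> M"
    using False unfolding M_def by (simp only: not_less)
  note m = gap_parameter_choice[OF assms(1) M_def this, folded m_def]
  have "1 / 204800000 * M \<le> real s"
    if "2 * C \<le> n" "uses_space R init upd n s" "approximates_F0 R init upd out n eps C"
    for n and R :: "nat pmf" and init upd out s
  proof -
    have "m < 4 * s"
      using assms(1) m(1-3) that by (intro approximates_F0_imp_space_gt) auto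
    then have "real m + 1 \<le> 4 * real s"
      by linarith
    then show ?thesis
      using m(4) by (simp add: field_simps)
  qed
  then show ?thesis
    unfolding M_def by (intro exI[of _ "2 * C"]) blast
qed

theorem theorem5p10:
  "\<exists>c0 > 0. \<exists>c > 0. \<forall>eps :: real. \<forall>C :: nat.
     0 < eps \<and> eps < 1 \<and> real C \<ge> c0 / eps \<longrightarrow>
     (\<exists>N :: nat. \<forall>n \<ge> N. \<forall>(R :: nat pmf) init upd out s.
        uses_space R init upd n s \<and> approximates_F0 R init upd out n eps C \<longrightarrow>
        real s \<ge> c * min (1 / eps^2) (real C))"
proof -
  \<comment> \<open>The bound holds for every C.\<close>
  have "\<forall>eps C. 0 < eps \<and> eps < 1 \<and> real C \<ge> 1 / eps \<longrightarrow>
     (\<exists>N :: nat. \<forall>n \<ge> N. \<forall>(R :: nat pmf) init upd out s.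
        uses_space R init upd n s \<and> approximates_F0 R init upd out n eps C \<longrightarrow>
        real s \<ge> 1 / 204800000 * min (1 / eps^2) (real C))"
    using F0_space_lower_bound by blast
  then show ?thesis
    by (intro exI[of _ "1::real"] exI[of _ "1 / 204800000 :: real"] conjI) simp_all
qed

end
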